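(* Let $N<M$ be positive integers, $p=1/M$, and let $\lambda\le N$ be a non-negative integer. For every non-negative integer $k$, $$P(X_{N,p,\lambda}=k)=\binom{N-\lambda}{k}p^k(\lambda+1)(k+\lambda+1)^{k-1}\bigl(1-(k+\lambda+1)p\bigr)^{N-\lambda-k}.$$
   Context: A configuration $\omega$ is an assignment to each neuron $j\in\{1,\dots,N\}$ of an energy level $E_j(\omega)\in\{1,\dots,M\}$. Let $Y_i(\omega)=\#\{j:E_j(\omega)=i\}$ and $A_{N,p}(\omega)=\inf\{i\ge0:\sum_{j=M-i}^{M}Y_j(\omega)\le i\}$. Under the uniform measure $P$, the levels $E_1,\dots,E_N$ are i.i.d. uniform on $\{1,\dots,M\}$. Given $\omega$, define $\omega'$ by $E_j(\omega')=M$ for $j\le\lambda$ and $E_j(\omega')=E_j(\omega)$ for $j>\lambda$, and set $X_{N,p,\lambda}(\omega)=A_{N,p}(\omega')-\lambda$. *)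

theory Defs
  imports "HOL-Probability.Probability"
begin

text \<open>Configurations: E :: nat => nat with E j the energy level of neuron j (j in {1..N}),
  values in {1..M}; extensional (undefined outside {1..N}).\<close>

definition configs :: "nat \<Rightarrow> nat \<Rightarrow> (nat \<Rightarrow> nat) set" where
  "configs N M = PiE {1..N} (\<lambda>_. {1..M})"

definition occ :: "nat \<Rightarrow> (nat \<Rightarrow> nat) \<Rightarrow> nat \<Rightarrow> nat" where
  "occ N E i = card {j \<in> {1..N}. E j = i}"

definition A_stat :: "nat \<Rightarrow> nat \<Rightarrow> (nat \<Rightarrow> nat) \<Rightarrow> nat" where
  "A_stat N M E = (LEAST i::nat. (\<Sum>j = M - i..M. occ N E j) \<le> i)"

definition shift_config :: "nat \<Rightarrow> nat \<Rightarrow> nat \<Rightarrow> (nat \<Rightarrow> nat) \<Rightarrow> (nat \<Rightarrow> nat)" where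
  "shift_config N M lam E = (\<lambda>j. if j \<in> {1..N} then (if j \<le> lam then M else E j) else undefined)"

definition X_stat :: "nat \<Rightarrow> nat \<Rightarrow> nat \<Rightarrow> (nat \<Rightarrow> nat) \<Rightarrow> int" where
  "X_stat N M lam E = int (A_stat N M (shift_config N M lam E)) - int lam"

end

theory Submission
  imports Defs
begin

(* Reading the energy levels from the top, A is the first i at which the top i + 1 levels hold at most
   i - lam of the neurons j > lam (the first lam neurons being forced to the top).  Conditioning on the
   set C of these neurons lying on the top level and deleting that level turns the event for
   (lam, M) into the same kind of event for (lam + |C| - 1, M - 1) on the remaining neurons.  The
   number of favourable configurations therefore satisfies a recursion in M, and Abel's identity
   sum_c (k choose c) a_(L+c)(k-c) = a_(L+1)(k), with a_L(k) = L (L+k)^(k-1), shows that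
   (n choose k) (L+1) (L+k+1)^(k-1) (M-L-k-1)^(n-k) solves it. *)

definition abel_weight :: "nat \<Rightarrow> nat \<Rightarrow> nat" where
  "abel_weight a k = (if k = 0 then 1 else a * (a + k) ^ (k - 1))"

lemma sum_binomial_times_index:
  "(\<Sum>c\<le>k. (k choose c) * c * x ^ (k - c)) = k * (x + 1 :: nat) ^ (k - 1)"
proof (cases k)
  case (Suc m)
  have "(\<Sum>c\<le>Suc m. (Suc m choose c) * c * x ^ (Suc m - c))
      = (\<Sum>c\<le>m. (Suc m choose Suc c) * Suc c * x ^ (m - c))"
    by (subst sum.atMost_Suc_shift) simp
  also have "\<dots> = Suc m * (\<Sum>c\<le>m. (m choose c) * x ^ (m - c))"
    unfolding sum_distrib_left
    by (rule sum.cong) (simp_all only: mult.commute[of _ "Suc _"] Suc_times_binomial mult.assoc)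
  also have "\<dots> = Suc m * (x + 1) ^ m"
    using binomial[of 1 x m] by (simp add: add.commute)
  finally show ?thesis using Suc by simp
qed simp

lemma abel_identity:
  "(\<Sum>c\<le>k. (k choose c) * abel_weight (L + c) (k - c)) = abel_weight (L + 1) k"
proof (cases "k = 0")
  case False
  define m where "m = L + k"
  have "m * (\<Sum>c\<le>k. (k choose c) * abel_weight (L + c) (k - c))
      = (\<Sum>c\<le>k. (k choose c) * (L + c) * m ^ (k - c))"
    unfolding sum_distrib_left
  proof (rule sum.cong)
    fix c assume "c \<in> {..k}"
    then show "m * ((k choose c) * abel_weight (L + c) (k - c)) = (k choose c) * (L + c) * m ^ (k - c)"
      by (cases "c = k") (auto simp: abel_weight_def m_def power_eq_if)
  qed simp
  also have "\<dots> = L * (\<Sum>c\<le>k. (k choose c) * m ^ (k - c))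
      + (\<Sum>c\<le>k. (k choose c) * c * m ^ (k - c))"
    by (simp add: sum_distrib_left sum.distrib algebra_simps)
  also have "\<dots> = L * (m + 1) ^ k + k * (m + 1) ^ (k - 1)"
    using binomial[of 1 m k] by (simp add: sum_binomial_times_index add.commute)
  also have "\<dots> = m * abel_weight (L + 1) k"
    using False by (cases k) (simp_all add: abel_weight_def m_def algebra_simps)
  finally show ?thesis
    using False by (simp add: m_def)
qed (simp add: abel_weight_def)

lemma sum_choose_abel_weight:
  "(\<Sum>c\<le>n. (n choose c) * (if c \<le> k then ((n - c) choose (k - c)) * abel_weight (L + c) (k - c) else 0))
    = (n choose k) * abel_weight (L + 1) k"
proof (cases "k \<le> n")
  case True
  have "(\<Sum>c\<le>n. (n choose c) * (if c \<le> k then ((n - c) choose (k - c)) * abel_weight (L + c) (k - c) else 0))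
      = (\<Sum>c\<le>k. (n choose c) * ((n - c) choose (k - c)) * abel_weight (L + c) (k - c))"
    using True by (intro sum.mono_neutral_cong_right) auto
  also have "\<dots> = (\<Sum>c\<le>k. (n choose k) * ((k choose c) * abel_weight (L + c) (k - c)))"
    using True by (intro sum.cong) (simp_all add: choose_mult)
  also have "\<dots> = (n choose k) * abel_weight (L + 1) k"
    by (simp add: sum_distrib_left[symmetric] abel_identity)
  finally show ?thesis .
qed (simp add: binomial_eq_0)

definition top_count :: "nat \<Rightarrow> nat set \<Rightarrow> (nat \<Rightarrow> nat) \<Rightarrow> nat \<Rightarrow> nat" where
  "top_count M J f i = card {j \<in> J. M - i \<le> f j}"

(* With L further neurons held at the top level, the avalanche of a configuration f of the neurons J
   halts at the first i whose top i + 1 levels M - i, ..., M hold at most i neurons, the L held ones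
   included; avalanche_stops L M J f k says that this first i is L + k. *)

definition halts_at :: "nat \<Rightarrow> nat \<Rightarrow> nat set \<Rightarrow> (nat \<Rightarrow> nat) \<Rightarrow> nat \<Rightarrow> bool" where
  "halts_at L M J f i \<longleftrightarrow> L + top_count M J f i \<le> i"

definition avalanche_stops :: "nat \<Rightarrow> nat \<Rightarrow> nat set \<Rightarrow> (nat \<Rightarrow> nat) \<Rightarrow> nat \<Rightarrow> bool" where
  "avalanche_stops L M J f k \<longleftrightarrow> (\<forall>i < L + k. \<not> halts_at L M J f i) \<and> halts_at L M J f (L + k)"

lemma avalanche_stops_cong:
  assumes "\<And>j. j \<in> J \<Longrightarrow> f j = g j"
  shows "avalanche_stops L M J f k = avalanche_stops L M J g k"
proof -
  have "top_count M J f = top_count M J g"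
    unfolding top_count_def using assms by (metis (mono_tags, lifting) Collect_cong)
  then show ?thesis
    unfolding avalanche_stops_def halts_at_def by simp
qed

lemma top_count_Suc_0:
  assumes "\<forall>j\<in>J. f j \<le> Suc M"
  shows "top_count (Suc M) J f 0 = card {j \<in> J. f j = Suc M}"
  unfolding top_count_def using assms by (metis (mono_tags) le_antisym minus_nat.diff_0)

lemma top_count_Suc_Suc:
  assumes "finite J" "\<forall>j\<in>J. f j \<le> Suc M"
  defines "C \<equiv> {j \<in> J. f j = Suc M}"
  shows "top_count (Suc M) J f (Suc i) = card C + top_count M (J - C) f i"
proof -
  have "{j \<in> J. Suc M - Suc i \<le> f j} = C \<union> {j \<in> J - C. M - i \<le> f j}"
    using assms(2) by (auto simp: C_def)
  moreover have "card (C \<union> {j \<in> J - C. M - i \<le> f j}) = card C + card {j \<in> J - C. M - i \<le> f j}"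
    using assms(1) by (intro card_Un_disjoint) (auto simp: C_def)
  ultimately show ?thesis
    unfolding top_count_def by simp
qed

lemma avalanche_stops_Suc:
  assumes "finite J" "\<forall>j\<in>J. f j \<le> Suc M"
  defines "C \<equiv> {j \<in> J. f j = Suc M}"
  shows "avalanche_stops L (Suc M) J f k \<longleftrightarrow>
    (if L + card C = 0 then k = 0
     else card C \<le> k \<and> avalanche_stops (L + card C - 1) M (J - C) f (k - card C))"
proof -
  define c where "c = card C"
  define halts where "halts = halts_at L (Suc M) J f"
  define halts' where "halts' = halts_at (L + c - 1) M (J - C) f"
  have halts_0: "halts 0 \<longleftrightarrow> L + c = 0"
    using top_count_Suc_0[OF assms(2)] by (simp add: halts_def halts_at_def c_def C_def)
  have halts_Suc: "halts (Suc i) \<longleftrightarrow> halts' i" if "L + c \<noteq> 0" for i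
    using top_count_Suc_Suc[OF assms(1,2), of i] that
    unfolding halts_def halts'_def halts_at_def c_def C_def by linarith
  have stops_iff: "avalanche_stops L (Suc M) J f k \<longleftrightarrow> (\<forall>i < L + k. \<not> halts i) \<and> halts (L + k)"
    by (simp add: avalanche_stops_def halts_def)
  have stops'_iff: "avalanche_stops (L + c - 1) M (J - C) f k' \<longleftrightarrow>
      (\<forall>i < L + c - 1 + k'. \<not> halts' i) \<and> halts' (L + c - 1 + k')" for k'
    by (simp add: avalanche_stops_def halts'_def)
  show ?thesis
  proof (cases "L + c = 0")
    case True
    then show ?thesis
      using halts_0 unfolding stops_iff c_def[symmetric] by (cases k) auto
  next
    case False
    have "c \<le> k" if "halts (L + k)"
    proof -
      have "L + k \<noteq> 0"
        using that halts_0 False by auto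
      then obtain n where "L + k = Suc n"
        using not0_implies_Suc by blast
      then show ?thesis
        using that halts_Suc[OF False] by (simp add: halts'_def halts_at_def)
    qed
    moreover have "(\<forall>i < L + k. \<not> halts i) \<and> halts (L + k) \<longleftrightarrow>
        (\<forall>i < L + c - 1 + (k - c). \<not> halts' i) \<and> halts' (L + c - 1 + (k - c))" if "c \<le> k"
    proof -
      have "L + k = Suc (L + c - 1 + (k - c))"
        using that False by linarith
      then show ?thesis
        using halts_0 halts_Suc[OF False] False by (simp only: All_less_Suc2) auto
    qed
    ultimately show ?thesis
      using False unfolding stops_iff stops'_iff c_def[symmetric] by auto
  qed
qed

lemma card_PiE_insert_by_level_set:
  assumes "finite J" "finite B" "t \<notin> B"
  shows "card {f \<in> PiE J (\<lambda>_. insert t B). P f}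
    = (\<Sum>C\<in>Pow J. card {g \<in> PiE (J - C) (\<lambda>_. B). P (\<lambda>j. if j \<in> C then t else g j)})"
proof -
  define F where "F = {f \<in> PiE J (\<lambda>_. insert t B). P f}"
  define fill where "fill C g = (\<lambda>j. if j \<in> C then t else g j)" for C and g :: "'a \<Rightarrow> 'b"
  have "finite F"
    unfolding F_def by (rule finite_subset[of _ "PiE J (\<lambda>_. insert t B)"]) (auto intro: finite_PiE assms)
  have level_set: "{f \<in> F. {j \<in> J. f j = t} = C} = fill C ` {g \<in> PiE (J - C) (\<lambda>_. B). P (fill C g)}"
    if "C \<subseteq> J" for C
  proof (intro equalityI subsetI)
    fix f assume "f \<in> {f \<in> F. {j \<in> J. f j = t} = C}"
    then have "f = fill C (restrict f (J - C))" "restrict f (J - C) \<in> PiE (J - C) (\<lambda>_. B)"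
      using that by (auto simp: F_def fill_def PiE_iff extensional_def fun_eq_iff)
    then show "f \<in> fill C ` {g \<in> PiE (J - C) (\<lambda>_. B). P (fill C g)}"
      using \<open>f \<in> _\<close> by (auto simp: F_def)
  next
    fix f assume "f \<in> fill C ` {g \<in> PiE (J - C) (\<lambda>_. B). P (fill C g)}"
    then show "f \<in> {f \<in> F. {j \<in> J. f j = t} = C}"
      using that assms(3) by (auto simp: F_def fill_def PiE_iff extensional_def split: if_splits)
  qed
  have inj: "inj_on (fill C) (PiE (J - C) (\<lambda>_. B))" for C
  proof (intro inj_onI ext)
    fix g h j assume gh: "g \<in> PiE (J - C) (\<lambda>_. B)" "h \<in> PiE (J - C) (\<lambda>_. B)"
      and "fill C g = fill C h"
    then have "fill C g j = fill C h j"
      by simp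
    with gh show "g j = h j"
      by (cases "j \<in> C") (auto simp: fill_def PiE_iff extensional_def)
  qed
  have "card F = (\<Sum>C\<in>Pow J. card {f \<in> F. {j \<in> J. f j = t} = C})"
    unfolding card_eq_sum using \<open>finite F\<close> assms(1)
    by (intro sum.group[symmetric]) (auto simp: F_def)
  also have "\<dots> = (\<Sum>C\<in>Pow J. card {g \<in> PiE (J - C) (\<lambda>_. B). P (fill C g)})"
    using level_set inj by (intro sum.cong refl) (auto intro!: card_image inj_on_subset[OF inj])
  finally show ?thesis
    unfolding F_def fill_def .
qed

lemma sum_Pow_card:
  assumes "finite J"
  shows "(\<Sum>C\<in>Pow J. G (card C)) = (\<Sum>c\<le>card J. of_nat (card J choose c) * G c)"
proof -
  have "(\<Sum>C\<in>Pow J. G (card C)) = (\<Sum>c\<le>card J. \<Sum>C\<in>{C \<in> Pow J. card C = c}. G (card C))"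
    using assms by (intro sum.group[symmetric]) (auto intro: card_mono)
  also have "\<dots> = (\<Sum>c\<le>card J. of_nat (card J choose c) * G c)"
    using n_subsets[OF assms] by (intro sum.cong refl) simp
  finally show ?thesis .
qed

lemma avalanche_stops_top_level:
  assumes "finite J" "C \<subseteq> J" "g \<in> PiE (J - C) (\<lambda>_. {1..M})"
  shows "avalanche_stops L (Suc M) J (\<lambda>j. if j \<in> C then Suc M else g j) k \<longleftrightarrow>
    (if L + card C = 0 then k = 0
     else card C \<le> k \<and> avalanche_stops (L + card C - 1) M (J - C) g (k - card C))"
proof -
  define f where "f = (\<lambda>j. if j \<in> C then Suc M else g j)"
  have g_le: "g j \<le> M" if "j \<in> J - C" for j
    using assms(3) that by (simp add: PiE_iff)
  then have "\<forall>j\<in>J. f j \<le> Suc M" and "{j \<in> J. f j = Suc M} = C"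
    using assms(2) by (auto simp: f_def le_SucI) (metis Diff_iff Suc_n_not_le_n g_le)+
  moreover have "avalanche_stops L' M (J - C) f k' = avalanche_stops L' M (J - C) g k'" for L' k'
    by (rule avalanche_stops_cong) (simp add: f_def)
  ultimately show ?thesis
    using avalanche_stops_Suc[OF assms(1), of f M L k] unfolding f_def by simp
qed

lemma card_avalanche_stops_Suc:
  assumes "finite J"
  shows "card {f \<in> PiE J (\<lambda>_. {1..Suc M}). avalanche_stops L (Suc M) J f k}
    = (\<Sum>C\<in>Pow J. if L + card C = 0 then (if k = 0 then M ^ card J else 0)
        else if card C \<le> k
        then card {g \<in> PiE (J - C) (\<lambda>_. {1..M}). avalanche_stops (L + card C - 1) M (J - C) g (k - card C)}
        else 0)" (is "_ = (\<Sum>C\<in>Pow J. ?count C)")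
proof -
  have "card {f \<in> PiE J (\<lambda>_. insert (Suc M) {1..M}). avalanche_stops L (Suc M) J f k}
      = (\<Sum>C\<in>Pow J. card {g \<in> PiE (J - C) (\<lambda>_. {1..M}).
           avalanche_stops L (Suc M) J (\<lambda>j. if j \<in> C then Suc M else g j) k})"
    by (rule card_PiE_insert_by_level_set) (simp_all add: assms)
  also have "\<dots> = (\<Sum>C\<in>Pow J. ?count C)"
  proof (rule sum.cong)
    fix C assume "C \<in> Pow J"
    then have C: "C \<subseteq> J" "finite C"
      using assms by (auto dest: finite_subset)
    have "{g \<in> PiE (J - C) (\<lambda>_. {1..M}). avalanche_stops L (Suc M) J (\<lambda>j. if j \<in> C then Suc M else g j) k}
      = {g \<in> PiE (J - C) (\<lambda>_. {1..M}). if L + card C = 0 then k = 0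
          else card C \<le> k \<and> avalanche_stops (L + card C - 1) M (J - C) g (k - card C)}"
      using avalanche_stops_top_level[OF assms C(1)] by blast
    then show "card {g \<in> PiE (J - C) (\<lambda>_. {1..M}).
        avalanche_stops L (Suc M) J (\<lambda>j. if j \<in> C then Suc M else g j) k} = ?count C"
      using C assms by (auto simp: card_PiE)
  qed simp
  finally show ?thesis
    by (simp add: atLeastAtMostSuc_conv)
qed

lemma card_avalanche_stops:
  assumes "finite J" "L + card J < M"
  shows "card {f \<in> PiE J (\<lambda>_. {1..M}). avalanche_stops L M J f k}
    = (card J choose k) * abel_weight (L + 1) k * (M - (L + k + 1)) ^ (card J - k)"
  using assms
proof (induction M arbitrary: L J k)
  case (Suc M L J k)
  define n where "n = card J"
  define G where "G c = (if c \<le> k then ((n - c) choose (k - c)) * abel_weight (L + c) (k - c) else 0)" for c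
  have "(if L + card C = 0 then (if k = 0 then M ^ n else 0)
        else if card C \<le> k
        then card {g \<in> PiE (J - C) (\<lambda>_. {1..M}). avalanche_stops (L + card C - 1) M (J - C) g (k - card C)}
        else 0) = G (card C) * (M - (L + k)) ^ (n - k)" if "C \<subseteq> J" for C
  proof -
    have card_diff: "card (J - C) = n - card C" and card_le: "card C \<le> n"
      using that Suc.prems(1) by (auto simp: n_def card_Diff_subset finite_subset card_mono)
    moreover have "L + card C - 1 + card (J - C) < M" if "L + card C \<noteq> 0"
      using Suc.prems(2) that card_diff card_le unfolding n_def by linarith
    ultimately show ?thesis
      using Suc.IH[of "J - C" "L + card C - 1" "k - card C"] Suc.prems(1)
      by (auto simp: G_def abel_weight_def n_def)
  qed
  then have "card {f \<in> PiE J (\<lambda>_. {1..Suc M}). avalanche_stops L (Suc M) J f k}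
      = (\<Sum>C\<in>Pow J. G (card C)) * (M - (L + k)) ^ (n - k)"
    unfolding card_avalanche_stops_Suc[OF Suc.prems(1)] sum_distrib_right n_def by (intro sum.cong) auto
  also have "\<dots> = (\<Sum>c\<le>n. (n choose c) * G c) * (M - (L + k)) ^ (n - k)"
    using sum_Pow_card[OF Suc.prems(1), of G] by (simp add: n_def)
  also have "\<dots> = (n choose k) * abel_weight (L + 1) k * (Suc M - (L + k + 1)) ^ (n - k)"
    by (simp add: G_def sum_choose_abel_weight)
  finally show ?case
    by (simp add: n_def)
qed simp

lemma card_PiE_Un_restrict:
  assumes "I \<inter> J = {}"
  shows "card {f \<in> PiE (I \<union> J) B. P (restrict f J)} = card (PiE I B) * card {g \<in> PiE J B. P g}"
proof -
  have "{f \<in> PiE (I \<union> J) B. P (restrict f J)} = merge I J ` (PiE I B \<times> {g \<in> PiE J B. P g})"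
  proof (intro equalityI subsetI)
    fix f assume f: "f \<in> {f \<in> PiE (I \<union> J) B. P (restrict f J)}"
    then have "f = merge I J (restrict f I, restrict f J)"
      using assms by (auto simp: merge_def PiE_iff extensional_def fun_eq_iff)
    with f show "f \<in> merge I J ` (PiE I B \<times> {g \<in> PiE J B. P g})"
      by (intro image_eqI[where x = "(restrict f I, restrict f J)"]) (auto simp: PiE_iff)
  qed (use assms in \<open>auto simp: PiE_iff restrict_merge\<close>)
  moreover have "inj_on (merge I J) (PiE I B \<times> PiE J B)"
  proof (rule inj_onI)
    have components: "z = (restrict (merge I J z) I, restrict (merge I J z) J)"
      if "z \<in> PiE I B \<times> PiE J B" for z
      using that assms by (cases z) auto
    fix x y assume "x \<in> PiE I B \<times> PiE J B" "y \<in> PiE I B \<times> PiE J B" "merge I J x = merge I J y"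
    then show "x = y"
      using components by metis
  qed
  then have "inj_on (merge I J) (PiE I B \<times> {g \<in> PiE J B. P g})"
    by (rule inj_on_subset) auto
  ultimately show ?thesis
    by (simp add: card_image card_cartesian_product)
qed

lemma sum_occ:
  assumes "finite S"
  shows "(\<Sum>i\<in>S. occ N E i) = card {j \<in> {1..N}. E j \<in> S}"
proof -
  have "card {j \<in> {1..N}. E j \<in> S} = (\<Sum>i\<in>S. card {j \<in> {j \<in> {1..N}. E j \<in> S}. E j = i})"
    unfolding card_eq_sum using assms by (intro sum.group[symmetric]) auto
  also have "\<dots> = (\<Sum>i\<in>S. occ N E i)"
    unfolding occ_def by (intro sum.cong refl arg_cong[where f = card]) auto
  finally show ?thesis ..
qed

lemma sum_occ_shift_config:
  assumes "E \<in> configs N M" "lam \<le> N"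
  shows "(\<Sum>j = M - i..M. occ N (shift_config N M lam E) j) = lam + top_count M {Suc lam..N} E i"
proof -
  have "{j \<in> {1..N}. shift_config N M lam E j \<in> {M - i..M}} = {1..lam} \<union> {j \<in> {Suc lam..N}. M - i \<le> E j}"
    using assms by (auto simp: shift_config_def configs_def PiE_iff)
  then have "(\<Sum>j = M - i..M. occ N (shift_config N M lam E) j)
      = card ({1..lam} \<union> {j \<in> {Suc lam..N}. M - i \<le> E j})"
    by (simp add: sum_occ)
  also have "\<dots> = lam + top_count M {Suc lam..N} E i"
    unfolding top_count_def by (subst card_Un_disjoint) auto
  finally show ?thesis .
qed

lemma X_stat_eq_iff:
  assumes "E \<in> configs N M" "lam \<le> N"
  shows "X_stat N M lam E = int k \<longleftrightarrow> avalanche_stops lam M {Suc lam..N} E k"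
proof -
  define halts where "halts = halts_at lam M {Suc lam..N} E"
  have "top_count M {Suc lam..N} E N \<le> card {Suc lam..N}"
    unfolding top_count_def by (rule card_mono) auto
  then have "halts N"
    using assms(2) by (simp add: halts_def halts_at_def)
  have "X_stat N M lam E = int k \<longleftrightarrow> (LEAST i. halts i) = lam + k"
    unfolding X_stat_def A_stat_def halts_def halts_at_def sum_occ_shift_config[OF assms] by linarith
  also have "\<dots> \<longleftrightarrow> (\<forall>i < lam + k. \<not> halts i) \<and> halts (lam + k)"
  proof
    assume "(LEAST i. halts i) = lam + k"
    then show "(\<forall>i < lam + k. \<not> halts i) \<and> halts (lam + k)"
      using LeastI[of halts, OF \<open>halts N\<close>] not_less_Least[of _ halts] by metis
  next
    assume "(\<forall>i < lam + k. \<not> halts i) \<and> halts (lam + k)"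
    then show "(LEAST i. halts i) = lam + k"
      by (intro Least_equality) (auto simp: not_less[symmetric])
  qed
  finally show ?thesis
    unfolding avalanche_stops_def halts_def .
qed

lemma real_abel_weight:
  "real (abel_weight (L + 1) k) = real (L + 1) * real (k + L + 1) powi (int k - 1)"
proof (cases k)
  case (Suc m)
  then have "int k - 1 = int m"
    by simp
  then show ?thesis
    using Suc by (simp add: abel_weight_def power_int_of_nat algebra_simps)
qed (simp add: abel_weight_def power_int_minus)

lemma count_ratio_closed_form:
  fixes M lam n k :: nat and p :: real
  assumes "lam + n < M" "p = 1 / real M"
  shows "real (M ^ lam * ((n choose k) * abel_weight (lam + 1) k * (M - (lam + k + 1)) ^ (n - k)))
      / real M ^ (lam + n)
    = real (n choose k) * p ^ k * real (lam + 1) * real (k + lam + 1) powi (int k - 1)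
      * (1 - real (k + lam + 1) * p) ^ (n - k)"
proof (cases "k \<le> n")
  case True
  define q where "q = real (M - (lam + k + 1))"
  have "M > 0"
    using assms(1) by simp
  have q: "1 - real (k + lam + 1) * p = q / real M"
    unfolding assms(2) q_def using assms(1) True by (simp add: of_nat_diff field_simps)
  have "real M ^ (lam + n) = real M ^ lam * (real M ^ k * real M ^ (n - k))"
    using True by (simp flip: power_add)
  then have "real (M ^ lam * ((n choose k) * abel_weight (lam + 1) k * (M - (lam + k + 1)) ^ (n - k)))
      / real M ^ (lam + n)
    = real (n choose k) * (1 / real M ^ k) * real (abel_weight (lam + 1) k) * (q ^ (n - k) / real M ^ (n - k))"
    using \<open>M > 0\<close> by (simp add: q_def)
  also have "\<dots> = real (n choose k) * p ^ k * real (lam + 1) * real (k + lam + 1) powi (int k - 1)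
      * (1 - real (k + lam + 1) * p) ^ (n - k)"
    unfolding q real_abel_weight by (simp add: assms(2) power_divide)
  finally show ?thesis .
qed (simp add: binomial_eq_0)

theorem mainTheorem4:
  fixes N M lam k :: nat and p :: real
  assumes "0 < N" and "N < M" and "p = 1 / real M" and "lam \<le> N"
  shows "measure_pmf.prob (pmf_of_set (configs N M)) {E. X_stat N M lam E = int k}
    = real ((N - lam) choose k) * p ^ k * real (lam + 1)
      * (real (k + lam + 1)) powi (int k - 1)
      * (1 - real (k + lam + 1) * p) ^ (N - lam - k)"
proof -
  define J where "J = {Suc lam..N}"
  have split: "{1..N} = {1..lam} \<union> J" "{1..lam} \<inter> J = {}" and "card J = N - lam"
    using assms(4) by (auto simp: J_def)
  have "configs N M \<inter> {E. X_stat N M lam E = int k} = {E \<in> configs N M. avalanche_stops lam M J E k}"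
    using X_stat_eq_iff[OF _ assms(4)] by (auto simp: J_def)
  also have "\<dots> = {E \<in> PiE ({1..lam} \<union> J) (\<lambda>_. {1..M}). avalanche_stops lam M J (restrict E J) k}"
    unfolding configs_def split(1) by (intro Collect_cong conj_cong refl avalanche_stops_cong) simp
  finally have "card (configs N M \<inter> {E. X_stat N M lam E = int k}) = M ^ lam
      * (((N - lam) choose k) * abel_weight (lam + 1) k * (M - (lam + k + 1)) ^ (N - lam - k))"
    using card_PiE_Un_restrict[OF split(2), of "\<lambda>_. {1..M}" "\<lambda>f. avalanche_stops lam M J f k"]
      card_avalanche_stops[of J lam M k] \<open>card J = N - lam\<close> assms(2,4)
    by (simp add: card_PiE J_def)
  moreover have "finite (configs N M)" "card (configs N M) = M ^ N"
    by (simp_all add: configs_def finite_PiE card_PiE)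
  moreover have "configs N M \<noteq> {}"
    using \<open>card (configs N M) = M ^ N\<close> assms(2) by (metis card.empty gr_implies_not0 power_not_zero)
  ultimately show ?thesis
    using count_ratio_closed_form[of lam "N - lam" M p k] assms(2-4)
    by (simp add: measure_pmf_of_set)
qed

end
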